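(* For $A,x\in\mathbb{R}$ define $E_0(A,x):=1$, $E_1(A,x):=e^{(1-x)A}$ and, for $n\ge2$, \[ E_n(A,x):=\begin{cases} \exp\!\Big(\big[x(E_1+E_3+\cdots+E_{n-1})-\tfrac n2\big]A\Big), & n \text{ even},\\[4pt] \exp\!\Big(\big[\tfrac{n+1}{2}-x(E_0+E_2+\cdots+E_{n-1})\big]A\Big), & n\text{ odd},\end{cases} \] with all $E_j$ evaluated at $(A,x)$. Define $\varphi_1(A,x):=x-1$, $\varphi_n(A,x):=\varphi_{n-1}(A,x)-1+xE_{n-1}(A,x)$ for $n\ge2$, and the polynomial $p_n(A):=\frac{\partial\varphi_n}{\partial x}(A,1)$. Then: (i) for every $n\ge2$, the positive roots of $p_{2n}$ are separated by the positive roots of $p_{2n-1}$, and the positive roots of $p_{2n+1}$ are separated by the positive roots of $p_{2n}$ that are less than $2$; (ii) for every $n\ge1$, the even polynomials $\frac{p_{2n}(A)}{2-A}$ and $p_{2n-1}(A)$ each have exactly $n-1$ positive roots; consequently, since they are even of degree $2n-2$, they also have $n-1$ negative roots, and all their roots are real and simple.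
   Context: Given two finite sets $R_1,R_2\subset\mathbb{R}$ (here, sets of roots), "$R_1$ is separated by $R_2$" means: all elements of $R_2$ lie between the minimal and maximal elements of $R_1$, and between any two consecutive elements of $R_2$ there... more precisely, any interval formed by a pair of consecutive elements of $R_1$ contains exactly one element of $R_2$ (i.e. the elements of $R_1$ and $R_2$ interlace, with $R_1$ having the extreme elements). For $n\ge1$, $2-A$ divides $p_{2n}(A)$, so $\frac{p_{2n}(A)}{2-A}$ is a polynomial. *)

theory Defs
  imports "HOL-Analysis.Analysis" "HOL-Computational_Algebra.Polynomial"
begin

fun E :: "nat \<Rightarrow> real \<Rightarrow> real \<Rightarrow> real" where
  "E n A x =
     (if n = 0 then 1
      else if n = 1 then exp ((1 - x) * A)
      else if even n then
        exp ((x * (\<Sum>j\<in>{j. j < n \<and> odd j}. E j A x) - real n / 2) * A)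
      else
        exp (((real n + 1) / 2 - x * (\<Sum>j\<in>{j. j < n \<and> even j}. E j A x)) * A))"

text \<open>phi_n(A,x) for n >= 1 (the value at n = 0 is an unused dummy).\<close>
fun phi :: "nat \<Rightarrow> real \<Rightarrow> real \<Rightarrow> real" where
  "phi 0 A x = 0"
| "phi (Suc 0) A x = x - 1"
| "phi (Suc (Suc n)) A x = phi (Suc n) A x - 1 + x * E (Suc n) A x"

definition p :: "nat \<Rightarrow> real \<Rightarrow> real" where
  "p n A = deriv (\<lambda>x. phi n A x) 1"

definition separated_by :: "real set \<Rightarrow> real set \<Rightarrow> bool" where
  "separated_by R1 R2 \<longleftrightarrow>
     finite R1 \<and> finite R2 \<and> R1 \<inter> R2 = {} \<and>
     (\<forall>r\<in>R2. \<exists>a\<in>R1. \<exists>b\<in>R1. a < r \<and> r < b) \<and>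
     (\<forall>a\<in>R1. \<forall>b\<in>R1. a < b \<and> R1 \<inter> {a<..<b} = {} \<longrightarrow>
        card (R2 \<inter> {a<..<b}) = 1)"

definition even_real_simple_roots :: "real poly \<Rightarrow> nat \<Rightarrow> bool" where
  "even_real_simple_roots Q n \<longleftrightarrow>
     Q \<noteq> 0 \<and> (\<forall>A. poly Q (- A) = poly Q A) \<and> degree Q = 2 * n - 2 \<and>
     card {A. 0 < A \<and> poly Q A = 0} = n - 1 \<and>
     card {A. A < 0 \<and> poly Q A = 0} = n - 1 \<and>
     (\<forall>z. poly (map_poly complex_of_real Q) z = 0 \<longrightarrow>
        Im z = 0 \<and> order z (map_poly complex_of_real Q) = 1)"

end

theory Submission
  imports Defs
begin

text \<open>At \<open>x = 1\<close> every \<open>E j\<close> equals 1, so differentiating the recursion for \<open>E n\<close> there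
  gives a linear recursion for the derivatives, and \<open>p n\<close> is \<open>n\<close> plus their sum. Solving it
  gives \<open>p (2m + 1) = P (m + 1)\<close> and \<open>p (2m + 2) = (2 - A) Q (m + 1)\<close> for polynomials \<open>P\<close>, \<open>Q\<close>
  of the Chebyshev-type recurrence \<open>R (k + 2) = (2 - A\<^sup>2) R (k + 1) - R k\<close>. Substituting
  \<open>A = 2 sin a\<close> gives \<open>Q n (2 sin a) sin 2a = sin 2na\<close> and \<open>P n (2 sin a) sin a = sin (2n - 1)a\<close>,
  so the positive roots are \<open>2 sin (k\<pi> / 2n)\<close> and \<open>2 sin (k\<pi> / (2n - 1))\<close> for \<open>0 < k < n\<close>.
  With their negatives these are \<open>2n - 2\<close> distinct roots of an even polynomial of degree
  \<open>2n - 2\<close>, hence all of its complex roots, each simple; and the interlacing of the roots is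
  that of the fractions \<open>k / 2n\<close>, \<open>k / (2n - 1)\<close> and \<open>k / (2n + 1)\<close>.\<close>

lemma Collect_less_Suc_conj:
  "{j. j < Suc n \<and> P j} = (if P n then insert n {j. j < n \<and> P j} else {j. j < n \<and> P j})"
  by (auto simp: less_Suc_eq)

lemma card_odd_less: "card {j::nat. j < n \<and> odd j} = n div 2"
  by (induction n) (auto simp: Collect_less_Suc_conj card_insert_if)

lemma card_even_less: "card {j::nat. j < n \<and> even j} = (n + 1) div 2"
  by (induction n) (auto simp: Collect_less_Suc_conj card_insert_if)

text \<open>The cases \<open>n = 0\<close> and \<open>n = 1\<close> of the definition are instances of the parity formulas.\<close>
lemma E_eq_parity:
  "E n A x =
     (if even n then exp ((x * (\<Sum>j | j < n \<and> odd j. E j A x) - real n / 2) * A)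
      else exp (((real n + 1) / 2 - x * (\<Sum>j | j < n \<and> even j. E j A x)) * A))"
proof -
  have "{j. j < Suc 0 \<and> even j} = {0}" by auto
  then show ?thesis by (subst E.simps) (auto simp: E.simps[of 0])
qed

declare E.simps [simp del]

lemma E_at_1 [simp]: "E n A 1 = 1"
proof (induction n rule: less_induct)
  case (less n)
  then have "(\<Sum>j | j < n \<and> odd j. E j A 1) = real (n div 2)"
    and "(\<Sum>j | j < n \<and> even j. E j A 1) = real ((n + 1) div 2)"
    by (simp_all add: card_odd_less card_even_less)
  then show ?case
    by (subst E_eq_parity) (auto simp: real_of_nat_div elim!: evenE oddE)
qed

fun dE :: "nat \<Rightarrow> real \<Rightarrow> real" where
  "dE n A =
     (if even n then (real n / 2 + (\<Sum>j | j < n \<and> odd j. dE j A)) * A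
      else - (((real n + 1) / 2 + (\<Sum>j | j < n \<and> even j. dE j A)) * A))"

declare dE.simps [simp del]

lemma E_has_derivative_at_1: "((\<lambda>x. E n A x) has_real_derivative dE n A) (at 1)"
proof (induction n rule: less_induct)
  case (less n)
  show ?case
  proof (cases "even n")
    case True
    then have E_n: "E n A = (\<lambda>x. exp ((x * (\<Sum>j | j < n \<and> odd j. E j A x) - real n / 2) * A))"
      using E_eq_parity[of n A] True by auto
    have dE_n: "dE n A = (real n / 2 + (\<Sum>j | j < n \<and> odd j. dE j A)) * A"
      using dE.simps[of n A] True by simp
    have half: "real (card {j. j < n \<and> odd j}) = real n / 2"
      using True by (simp add: card_odd_less real_of_nat_div)
    show ?thesis
      unfolding E_n dE_n by (auto intro!: derivative_eq_intros less.IH simp: half)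
  next
    case False
    then have E_n: "E n A = (\<lambda>x. exp (((real n + 1) / 2 - x * (\<Sum>j | j < n \<and> even j. E j A x)) * A))"
      using E_eq_parity[of n A] False by auto
    have dE_n: "dE n A = - (((real n + 1) / 2 + (\<Sum>j | j < n \<and> even j. dE j A)) * A)"
      using dE.simps[of n A] False by simp
    have half: "real (card {j. j < n \<and> even j}) = (real n + 1) / 2"
      using False by (auto simp: card_even_less elim!: oddE)
    show ?thesis
      unfolding E_n dE_n by (auto intro!: derivative_eq_intros less.IH simp: half algebra_simps)
  qed
qed

lemma phi_has_derivative_at_1:
  "((\<lambda>x. phi n A x) has_real_derivative
     real n + (\<Sum>j | j < n \<and> odd j. dE j A) + (\<Sum>j | j < n \<and> even j. dE j A)) (at 1)"
proof (induction n rule: induct_nat_012[case_names 0 1 Suc_Suc])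
  case 1
  have "dE 0 A = 0" by (simp add: dE.simps)
  then show ?case by (auto intro!: derivative_eq_intros simp: Collect_less_Suc_conj)
next
  case (Suc_Suc n)
  then show ?case
    by (auto intro!: derivative_eq_intros E_has_derivative_at_1
        simp: Collect_less_Suc_conj[of "Suc n"])
qed simp

lemma p_eq_sum:
  "p n A = real n + (\<Sum>j | j < n \<and> odd j. dE j A) + (\<Sum>j | j < n \<and> even j. dE j A)"
  unfolding p_def by (rule DERIV_imp_deriv[OF phi_has_derivative_at_1])

text \<open>With \<open>A = 2 sin a\<close> the factor \<open>2 - A\<^sup>2\<close> equals \<open>2 cos 2a\<close>, so \<open>cheb_rec\<close> follows the
  recurrence of \<open>n \<mapsto> sin (b + 2na)\<close>: these are Chebyshev polynomials in disguise.\<close>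
fun cheb_rec :: "real poly \<Rightarrow> real poly \<Rightarrow> nat \<Rightarrow> real poly" where
  "cheb_rec R0 R1 0 = R0"
| "cheb_rec R0 R1 (Suc 0) = R1"
| "cheb_rec R0 R1 (Suc (Suc n)) = [:2, 0, -1:] * cheb_rec R0 R1 (Suc n) - cheb_rec R0 R1 n"

abbreviation Q_poly :: "nat \<Rightarrow> real poly" where
  "Q_poly \<equiv> cheb_rec 0 1"

abbreviation P_poly :: "nat \<Rightarrow> real poly" where
  "P_poly \<equiv> cheb_rec (- 1) 1"

lemma poly_cheb_rec_Suc_Suc:
  "poly (cheb_rec R0 R1 (Suc (Suc n))) A =
     (2 - A\<^sup>2) * poly (cheb_rec R0 R1 (Suc n)) A - poly (cheb_rec R0 R1 n) A"
  by (simp add: algebra_simps power2_eq_square)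

declare cheb_rec.simps(3) [simp del]

lemma degree_cheb_rec:
  assumes "degree R0 = 0"
  shows "degree (cheb_rec R0 1 (Suc n)) = 2 * n \<and> lead_coeff (cheb_rec R0 1 (Suc n)) = (- 1) ^ n"
proof -
  have "degree (cheb_rec R0 1 (Suc n)) = 2 * n \<and> lead_coeff (cheb_rec R0 1 (Suc n)) = (- 1) ^ n
    \<and> degree (cheb_rec R0 1 n) \<le> 2 * n"
  proof (induction n)
    case 0
    then show ?case using assms by simp
  next
    case (Suc n)
    let ?R = "cheb_rec R0 1" and ?t = "[:2, 0, -1:] :: real poly"
    have deg: "degree (?R (Suc n)) = 2 * n" and lead: "lead_coeff (?R (Suc n)) = (- 1) ^ n"
      and deg_prev: "degree (?R n) \<le> 2 * n"
      using Suc by blast+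
    have "degree (?t * ?R (Suc n)) = degree ?t + degree (?R (Suc n))"
      using lead by (intro degree_mult_eq) auto
    then have "degree (?t * ?R (Suc n)) = 2 * Suc n"
      using deg by simp
    moreover have "degree (?R n) < 2 * Suc n"
      using deg_prev by simp
    ultimately have deg_sum: "degree (?t * ?R (Suc n) + - ?R n) = 2 * Suc n"
      and lead_sum: "lead_coeff (?t * ?R (Suc n) + - ?R n) = lead_coeff (?t * ?R (Suc n))"
      by (simp_all only: degree_add_eq_left degree_minus coeff_add coeff_minus coeff_eq_0
          minus_zero add_0_right)
    have R_Suc_Suc: "?R (Suc (Suc n)) = ?t * ?R (Suc n) + - ?R n"
      by (simp only: cheb_rec.simps(3) diff_conv_add_uminus)
    have "lead_coeff (?R (Suc (Suc n))) = (- 1) ^ Suc n"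
      unfolding R_Suc_Suc lead_sum lead_coeff_mult lead by simp
    moreover have "degree (?R (Suc (Suc n))) = 2 * Suc n"
      unfolding R_Suc_Suc by (rule deg_sum)
    ultimately show ?case
      using deg by simp
  qed
  then show ?thesis
    by blast
qed

lemma poly_cheb_rec_minus:
  assumes "\<And>x. poly R0 (- x) = poly R0 x" and "\<And>x. poly R1 (- x) = poly R1 x"
  shows "poly (cheb_rec R0 R1 n) (- x) = poly (cheb_rec R0 R1 n) x"
  by (induction n rule: induct_nat_012) (simp_all add: assms poly_cheb_rec_Suc_Suc)

lemma poly_cheb_rec_two_sin:
  assumes "poly R0 (2 * sin a) * s = sin b" and "poly R1 (2 * sin a) * s = sin (b + 2 * a)"
  shows "poly (cheb_rec R0 R1 n) (2 * sin a) * s = sin (b + 2 * real n * a)"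
proof (induction n rule: induct_nat_012[case_names 0 1 Suc_Suc])
  case (Suc_Suc n)
  let ?R = "cheb_rec R0 R1" and ?c = "b + 2 * real (Suc n) * a"
  have "poly (?R (Suc (Suc n))) (2 * sin a) * s =
      (2 - (2 * sin a)\<^sup>2) * (poly (?R (Suc n)) (2 * sin a) * s) - poly (?R n) (2 * sin a) * s"
    by (simp only: poly_cheb_rec_Suc_Suc algebra_simps)
  also have "\<dots> = 2 * cos (2 * a) * sin ?c - sin (?c - 2 * a)"
  proof -
    have "2 - (2 * sin a)\<^sup>2 = 2 * cos (2 * a)"
      by (simp add: cos_double_sin power_mult_distrib)
    moreover have "?c - 2 * a = b + 2 * real n * a"
      by (simp add: algebra_simps)
    ultimately show ?thesis
      by (simp only: Suc_Suc)
  qed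
  also have "\<dots> = sin (?c + 2 * a)"
    by (simp add: sin_add sin_diff)
  finally show ?case
    by (simp add: algebra_simps)
qed (use assms in simp_all)

lemma poly_P_poly_Suc: "poly (P_poly (Suc m)) A = poly (Q_poly m) A + poly (Q_poly (Suc m)) A"
proof (induction m rule: induct_nat_012[case_names 0 1 Suc_Suc])
  case (Suc_Suc n)
  have "poly (P_poly (Suc (Suc (Suc n)))) A =
      (2 - A\<^sup>2) * poly (P_poly (Suc (Suc n))) A - poly (P_poly (Suc n)) A"
    by (rule poly_cheb_rec_Suc_Suc)
  also have "\<dots> = (2 - A\<^sup>2) * (poly (Q_poly (Suc n)) A + poly (Q_poly (Suc (Suc n))) A)
      - (poly (Q_poly n) A + poly (Q_poly (Suc n)) A)"
    using Suc_Suc by simp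
  also have "\<dots> = poly (Q_poly (Suc (Suc n))) A + poly (Q_poly (Suc (Suc (Suc n)))) A"
    by (simp add: poly_cheb_rec_Suc_Suc algebra_simps)
  finally show ?case .
qed (simp_all add: poly_cheb_rec_Suc_Suc)

text \<open>\<open>w m\<close> itself is no polynomial combination of the \<open>Q_poly\<close> values (that needs a division
  by \<open>A\<close>), so the induction carries \<open>A * w m\<close> instead.\<close>
lemma coupled_recurrence_Q_poly:
  fixes u w :: "nat \<Rightarrow> real"
  assumes "u 0 = 0" and "w 0 = 1"
    and u_Suc: "\<And>k. u (Suc k) = u k + 1 - A * w k"
    and w_Suc: "\<And>k. w (Suc k) = w k + 1 + A * u (Suc k)"
  shows "u m + w m = poly (Q_poly m) A + poly (Q_poly (Suc m)) A
    \<and> A * w m = 1 + poly (Q_poly m) A + (A - 1) * poly (Q_poly (Suc m)) A"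
proof (induction m)
  case 0
  then show ?case using assms by simp
next
  case (Suc m)
  then show ?case
    unfolding w_Suc u_Suc poly_cheb_rec_Suc_Suc by algebra
qed

lemma p_eq_cheb_rec:
  assumes "0 < n"
  shows p_odd_eq: "p (2 * n - 1) A = poly (P_poly n) A"
    and p_even_eq: "p (2 * n) A = (2 - A) * poly (Q_poly n) A"
proof -
  obtain m where n: "n = Suc m"
    using assms gr0_implies_Suc by blast
  \<comment> \<open>\<open>dE (2k) A = A * u k\<close> and \<open>dE (2k + 1) A = - A * w k\<close>\<close>
  define u where "u k = real k + (\<Sum>j | j < 2 * k \<and> odd j. dE j A)" for k
  define w where "w k = real k + 1 + (\<Sum>j | j < 2 * k + 1 \<and> even j. dE j A)" for k
  have "dE (2 * k + 1) A = - A * w k" for k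
    by (subst dE.simps) (simp add: w_def field_simps)
  then have u_Suc: "u (Suc k) = u k + 1 - A * w k" for k
    by (simp add: u_def Collect_less_Suc_conj)
  have "dE (2 * k + 2) A = A * u (Suc k)" for k
    by (subst dE.simps) (simp add: u_def field_simps)
  then have w_Suc: "w (Suc k) = w k + 1 + A * u (Suc k)" for k
    by (simp add: w_def Collect_less_Suc_conj)
  have "u 0 = 0" and "w 0 = 1"
    by (simp_all add: u_def w_def dE.simps[of 0])
  then have sum: "u m + w m = poly (Q_poly m) A + poly (Q_poly (Suc m)) A"
    and w_m: "A * w m = 1 + poly (Q_poly m) A + (A - 1) * poly (Q_poly (Suc m)) A"
    using coupled_recurrence_Q_poly[of u w A m] u_Suc w_Suc by blast+
  have "p (2 * n - 1) A = u m + w m"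
    by (simp add: n p_eq_sum u_def w_def Collect_less_Suc_conj[of "2 * m"])
  then show "p (2 * n - 1) A = poly (P_poly n) A"
    by (simp add: n sum poly_P_poly_Suc)
  have "p (2 * n) A = u (Suc m) + w m"
    by (simp add: n p_eq_sum u_def w_def Collect_less_Suc_conj[of "Suc (2 * m)"])
  then show "p (2 * n) A = (2 - A) * poly (Q_poly n) A"
    using sum w_m by (simp add: n u_Suc algebra_simps)
qed

lemma poly_map_poly_of_real:
  "poly (map_poly of_real R) (of_real x) = (of_real (poly R x) :: 'a::{real_algebra_1,comm_semiring_0})"
  by (induction R) (auto simp: map_poly_pCons)

lemma poly_roots_eq_if_degree_le_card:
  fixes p :: "'a::idom poly"
  assumes "p \<noteq> 0" and "S \<subseteq> {x. poly p x = 0}" and "degree p \<le> card S"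
  shows "{x. poly p x = 0} = S"
proof -
  have "finite {x. poly p x = 0}"
    using assms(1) by (rule poly_roots_finite)
  moreover have "card {x. poly p x = 0} \<le> card S"
    using card_poly_roots_bound[OF assms(1)] assms(3) by linarith
  ultimately show ?thesis
    using assms(2) by (metis card_seteq)
qed

lemma rsquarefree_if_card_roots_eq_degree:
  fixes p :: "'a::idom poly"
  assumes "p \<noteq> 0" and card_roots: "card {x. poly p x = 0} = degree p"
  shows "rsquarefree p"
proof -
  have "order a p \<le> 1" for a
  proof (rule ccontr)
    assume "\<not> order a p \<le> 1"
    then have "[:- a, 1:] ^ 2 dvd p"
      by (intro order_divides[THEN iffD2]) auto
    then obtain q where p: "p = [:- a, 1:] ^ 2 * q" ..
    with assms(1) have "q \<noteq> 0" by auto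
    then have deg: "degree p = 2 + degree q"
      unfolding p by (subst degree_mult_eq) (auto simp: degree_linear_power)
    have "{x. poly p x = 0} \<subseteq> insert a {x. poly q x = 0}"
      by (auto simp: p)
    then have "card {x. poly p x = 0} \<le> card (insert a {x. poly q x = 0})"
      by (intro card_mono) (simp_all add: poly_roots_finite[OF \<open>q \<noteq> 0\<close>])
    also have "\<dots> \<le> Suc (card {x. poly q x = 0})"
      by (simp add: card_insert_if poly_roots_finite[OF \<open>q \<noteq> 0\<close>])
    also have "\<dots> \<le> Suc (degree q)"
      using card_poly_roots_bound[OF \<open>q \<noteq> 0\<close>] by simp
    finally show False
      using card_roots deg by simp
  qed
  then show ?thesis
    using assms(1) by (auto simp: rsquarefree_def le_Suc_eq)
qed

lemma real_poly_complex_roots_real_simple: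
  fixes R :: "real poly"
  assumes "R \<noteq> 0" and card_roots: "card {x. poly R x = 0} = degree R"
    and root: "poly (map_poly complex_of_real R) z = 0"
  shows "Im z = 0 \<and> order z (map_poly complex_of_real R) = 1"
proof
  let ?C = "map_poly complex_of_real R"
  have "?C \<noteq> 0" and "degree ?C = degree R"
    using \<open>R \<noteq> 0\<close> by (simp_all add: map_poly_eq_0_iff degree_map_poly)
  moreover have card_of_real: "card (of_real ` {x. poly R x = 0} :: complex set) = degree R"
    using card_roots by (simp add: card_image inj_on_def)
  ultimately have complex_roots: "{z. poly ?C z = 0} = of_real ` {x. poly R x = 0}"
    by (intro poly_roots_eq_if_degree_le_card) (auto simp: poly_map_poly_of_real)
  then have "z \<in> of_real ` {x. poly R x = 0}"
    using root by blast
  then show "Im z = 0"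
    by auto
  have "rsquarefree ?C"
    using \<open>?C \<noteq> 0\<close> \<open>degree ?C = degree R\<close> card_of_real complex_roots
    by (intro rsquarefree_if_card_roots_eq_degree) simp_all
  then show "order z ?C = 1"
    using root \<open>?C \<noteq> 0\<close> by (rule rsquarefree_root_order)
qed

lemma even_poly_roots:
  fixes R :: "real poly"
  assumes "R \<noteq> 0" and even: "\<And>x. poly R (- x) = poly R x"
    and S: "S \<subseteq> {x. 0 < x \<and> poly R x = 0}" and "finite S" and "degree R \<le> 2 * card S"
  shows "{x. poly R x = 0} = S \<union> uminus ` S" and "card (S \<union> uminus ` S) = 2 * card S"
proof -
  have "S \<inter> uminus ` S = {}"
  proof (rule equals0I)
    fix x assume "x \<in> S \<inter> uminus ` S"
    then obtain y where y: "x \<in> S" "y \<in> S" "x = - y" by blast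
    then have "0 < x" and "0 < y"
      using S by blast+
    with y(3) show False
      by simp
  qed
  then show card: "card (S \<union> uminus ` S) = 2 * card S"
    using \<open>finite S\<close> by (simp add: card_Un_disjoint card_image)
  moreover have "S \<union> uminus ` S \<subseteq> {x. poly R x = 0}"
    using S even by fastforce
  ultimately show "{x. poly R x = 0} = S \<union> uminus ` S"
    using \<open>degree R \<le> 2 * card S\<close> by (intro poly_roots_eq_if_degree_le_card \<open>R \<noteq> 0\<close>) simp_all
qed

lemma even_real_simple_rootsI:
  fixes R :: "real poly" and f :: "nat \<Rightarrow> real"
  assumes "R \<noteq> 0" and deg: "degree R = 2 * n - 2" and even: "\<And>x. poly R (- x) = poly R x"
    and mono: "strict_mono_on {1..<n} f"
    and roots: "\<And>k. k \<in> {1..<n} \<Longrightarrow> 0 < f k \<and> poly R (f k) = 0"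
  shows "{x. 0 < x \<and> poly R x = 0} = f ` {1..<n}" and "even_real_simple_roots R n"
proof -
  let ?S = "f ` {1..<n}"
  have S: "?S \<subseteq> {x. 0 < x \<and> poly R x = 0}"
    using roots by auto
  have card_S: "card ?S = n - 1" and card_neg_S: "card (uminus ` ?S) = n - 1"
    using strict_mono_on_imp_inj_on[OF mono] by (simp_all add: card_image)
  have real_roots: "{x. poly R x = 0} = ?S \<union> uminus ` ?S"
    and card_roots: "card (?S \<union> uminus ` ?S) = degree R"
    using even_poly_roots[OF \<open>R \<noteq> 0\<close> even S] card_S deg by simp_all
  have pos_not_neg: "x \<notin> uminus ` ?S" if "0 < x" for x
    using that S by fastforce
  show pos: "{x. 0 < x \<and> poly R x = 0} = ?S"
  proof (intro equalityI subsetI)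
    fix x assume "x \<in> {x. 0 < x \<and> poly R x = 0}"
    then show "x \<in> ?S"
      using real_roots pos_not_neg by blast
  qed (use S in blast)
  have neg_not_pos: "x \<notin> ?S" if "x < 0" for x
    using that S by fastforce
  have neg: "{x. x < 0 \<and> poly R x = 0} = uminus ` ?S"
  proof (intro equalityI subsetI)
    fix x assume "x \<in> {x. x < 0 \<and> poly R x = 0}"
    then show "x \<in> uminus ` ?S"
      using real_roots neg_not_pos by blast
  qed (use real_roots S in force)
  show "even_real_simple_roots R n"
    unfolding even_real_simple_roots_def
    using \<open>R \<noteq> 0\<close> even deg pos neg card_S card_neg_S card_roots real_roots
      real_poly_complex_roots_real_simple[OF \<open>R \<noteq> 0\<close>] by simp
qed

definition chord :: "nat \<Rightarrow> nat \<Rightarrow> real" where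
  "chord d k = 2 * sin (real k * pi / real d)"

lemma chord_less:
  assumes "k * d' < k' * d" and "2 * k' \<le> d'"
  shows "chord d k < chord d' k'"
proof -
  have "0 < d" and "0 < d'"
    using assms by (auto intro!: gr0I)
  have "real k * real d' * pi < real k' * real d * pi"
    using assms(1) by (simp flip: of_nat_mult)
  then have "real k * pi / real d < real k' * pi / real d'"
    using \<open>0 < d\<close> \<open>0 < d'\<close> by (simp add: field_simps)
  moreover have "real k' * pi / real d' \<le> pi / 2"
    using assms(2) \<open>0 < d'\<close> by (simp add: field_simps flip: of_nat_mult)
  moreover have "- (pi / 2) \<le> real k * pi / real d"
    by (rule order_trans[of _ 0]) simp_all
  ultimately show ?thesis
    unfolding chord_def using sin_monotone_2pi by simp
qed

lemma chord_pos: "0 < k \<Longrightarrow> 2 * k \<le> d \<Longrightarrow> 0 < chord d k"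
  using chord_less[of 0 d k d] by (simp add: chord_def)

lemma chord_half: "0 < n \<Longrightarrow> chord (2 * n) n = 2"
  by (simp add: chord_def)

lemma poly_Q_poly_chord:
  assumes "0 < k" and "k < n"
  shows "poly (Q_poly n) (chord (2 * n) k) = 0"
proof -
  define a where "a = real k * pi / real (2 * n)"
  have "poly (Q_poly n) (2 * sin a) * sin (2 * a) = sin (0 + 2 * real n * a)"
    by (rule poly_cheb_rec_two_sin) simp_all
  also have "\<dots> = 0"
    using assms by (simp add: a_def)
  finally have "poly (Q_poly n) (2 * sin a) * sin (2 * a) = 0" .
  moreover have "0 < sin (2 * a)"
    using assms by (intro sin_gt_zero) (simp_all add: a_def field_simps)
  ultimately show ?thesis
    by (simp add: chord_def a_def)
qed

lemma poly_P_poly_chord: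
  assumes "0 < k" and "k < n"
  shows "poly (P_poly n) (chord (2 * n - 1) k) = 0"
proof -
  define a where "a = real k * pi / real (2 * n - 1)"
  have "poly (P_poly n) (2 * sin a) * sin a = sin (- a + 2 * real n * a)"
    by (rule poly_cheb_rec_two_sin) simp_all
  also have "\<dots> = sin (real (2 * n - 1) * a)"
    using assms by (simp add: of_nat_diff algebra_simps)
  also have "\<dots> = 0"
    using assms by (simp add: a_def)
  finally have "poly (P_poly n) (2 * sin a) * sin a = 0" .
  moreover have "0 < 2 * sin a"
    using chord_pos[of k "2 * n - 1"] assms by (simp add: chord_def a_def)
  ultimately show ?thesis
    by (simp add: chord_def a_def)
qed

lemma cheb_rec_roots:
  assumes "0 < n" and "degree R0 = 0" and "2 * n - 1 \<le> d"
    and roots: "\<And>k. 0 < k \<Longrightarrow> k < n \<Longrightarrow> poly (cheb_rec R0 1 n) (chord d k) = 0"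
  shows "{x. 0 < x \<and> poly (cheb_rec R0 1 n) x = 0} = chord d ` {1..<n}"
    and "even_real_simple_roots (cheb_rec R0 1 n) n"
proof -
  obtain m where n: "n = Suc m"
    using \<open>0 < n\<close> gr0_implies_Suc by blast
  have "cheb_rec R0 1 n \<noteq> 0" and "degree (cheb_rec R0 1 n) = 2 * n - 2"
    using degree_cheb_rec[OF \<open>degree R0 = 0\<close>, of m] n by auto
  moreover obtain c where "R0 = [:c:]"
    using \<open>degree R0 = 0\<close> degree0_coeffs by blast
  then have "poly (cheb_rec R0 1 n) (- x) = poly (cheb_rec R0 1 n) x" for x
    by (intro poly_cheb_rec_minus) simp_all
  moreover have "strict_mono_on {1..<n} (chord d)"
    using assms(3) by (intro strict_mono_onI chord_less) auto
  moreover have "0 < chord d k \<and> poly (cheb_rec R0 1 n) (chord d k) = 0" if "k \<in> {1..<n}" for k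
    using that assms(3) by (auto intro: chord_pos roots)
  ultimately show "{x. 0 < x \<and> poly (cheb_rec R0 1 n) x = 0} = chord d ` {1..<n}"
    and "even_real_simple_roots (cheb_rec R0 1 n) n"
    by (fact even_real_simple_rootsI)+
qed

lemma Q_poly_roots:
  assumes "0 < n"
  shows "{x. 0 < x \<and> poly (Q_poly n) x = 0} = chord (2 * n) ` {1..<n}"
    and "even_real_simple_roots (Q_poly n) n"
  using cheb_rec_roots[of n 0 "2 * n"] poly_Q_poly_chord assms by simp_all

lemma P_poly_roots:
  assumes "0 < n"
  shows "{x. 0 < x \<and> poly (P_poly n) x = 0} = chord (2 * n - 1) ` {1..<n}"
    and "even_real_simple_roots (P_poly n) n"
  using cheb_rec_roots[of n "- 1" "2 * n - 1"] poly_P_poly_chord assms by simp_all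

lemma positive_roots_p_odd:
  assumes "0 < n"
  shows "{A. 0 < A \<and> p (2 * n - 1) A = 0} = chord (2 * n - 1) ` {1..<n}"
  unfolding p_odd_eq[OF assms] by (rule P_poly_roots(1)[OF assms])

lemma positive_roots_p_even:
  assumes "0 < n"
  shows "{A. 0 < A \<and> p (2 * n) A = 0} = chord (2 * n) ` {1..n}"
    and "{A. 0 < A \<and> A < 2 \<and> p (2 * n) A = 0} = chord (2 * n) ` {1..<n}"
proof -
  note p_eq = p_even_eq[OF assms]
  have chord_less_2: "chord (2 * n) k < 2" if "k \<in> {1..<n}" for k
    using that chord_less[of k "2 * n" n "2 * n"] chord_half[OF assms] by simp
  have "{A. 0 < A \<and> p (2 * n) A = 0} = insert (chord (2 * n) n) (chord (2 * n) ` {1..<n})"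
    using Q_poly_roots(1)[OF assms] chord_half[OF assms] by (auto simp: p_eq)
  also have "\<dots> = chord (2 * n) ` {1..n}"
  proof -
    have "{1..n} = insert n {1..<n}"
      using assms by auto
    then show ?thesis
      by simp
  qed
  finally show "{A. 0 < A \<and> p (2 * n) A = 0} = chord (2 * n) ` {1..n}" .
  show "{A. 0 < A \<and> A < 2 \<and> p (2 * n) A = 0} = chord (2 * n) ` {1..<n}"
    using Q_poly_roots(1)[OF assms] chord_less_2 by (auto simp: p_eq)
qed

lemma separated_by_interlacing:
  fixes h g :: "nat \<Rightarrow> real"
  assumes mono: "strict_mono_on {1..N} h"
    and between: "\<And>k. 1 \<le> k \<Longrightarrow> k < N \<Longrightarrow> h k < g k \<and> g k < h (Suc k)"
  shows "separated_by (h ` {1..N}) (g ` {1..<N})"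
proof -
  have below: "h i < g k" if "i \<in> {1..N}" "k \<in> {1..<N}" "i \<le> k" for i k
    using strict_mono_on_leD[OF mono, of i k] between[of k] that by force
  have above: "g k < h i" if "i \<in> {1..N}" "k \<in> {1..<N}" "k < i" for i k
    using strict_mono_on_leD[OF mono, of "Suc k" i] between[of k] that by force
  have "h ` {1..N} \<inter> g ` {1..<N} = {}"
  proof (rule equals0I)
    fix x assume "x \<in> h ` {1..N} \<inter> g ` {1..<N}"
    then obtain i k where "i \<in> {1..N}" "k \<in> {1..<N}" "h i = g k"
      by auto
    then show False
      using below[of i k] above[of i k] by (cases "i \<le> k") auto
  qed
  moreover have "\<exists>a\<in>h ` {1..N}. \<exists>b\<in>h ` {1..N}. a < r \<and> r < b" if "r \<in> g ` {1..<N}" for r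
    using that between by fastforce
  moreover have "card (g ` {1..<N} \<inter> {a<..<b}) = 1"
    if a: "a \<in> h ` {1..N}" and b: "b \<in> h ` {1..N}" and "a < b"
      and no_h_between: "h ` {1..N} \<inter> {a<..<b} = {}" for a b
  proof -
    obtain i j where i: "i \<in> {1..N}" "a = h i" and j: "j \<in> {1..N}" "b = h j"
      using a b by blast
    have "i < j"
      using strict_mono_on_leD[OF mono j(1) i(1)] i j \<open>a < b\<close> by fastforce
    have "j = Suc i"
    proof (rule ccontr)
      assume "j \<noteq> Suc i"
      then have "h (Suc i) \<in> h ` {1..N} \<inter> {a<..<b}"
        using \<open>i < j\<close> i j by (auto intro!: strict_mono_onD[OF mono])
      then show False
        using no_h_between by blast
    qed
    have "g ` {1..<N} \<inter> {a<..<b} = {g i}"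
    proof (intro equalityI subsetI)
      fix r assume "r \<in> g ` {1..<N} \<inter> {a<..<b}"
      then obtain k where k: "k \<in> {1..<N}" "r = g k" "h i < g k" "g k < h (Suc i)"
        using i j \<open>j = Suc i\<close> by auto
      have "\<not> k < i"
        using above[of i k] i k by auto
      moreover have "\<not> Suc i \<le> k"
        using below[of "Suc i" k] j \<open>j = Suc i\<close> k by auto
      ultimately have "k = i"
        by simp
      then show "r \<in> {g i}"
        using k by simp
    qed (use i j \<open>j = Suc i\<close> between[of i] in auto)
    then show ?thesis
      by simp
  qed
  ultimately show ?thesis
    unfolding separated_by_def by blast
qed

lemma chord_interlacing_even_odd:
  assumes "0 < n"
  shows "separated_by (chord (2 * n) ` {1..n}) (chord (2 * n - 1) ` {1..<n})"
proof -
  have "k * (2 * n) < Suc k * (2 * n - 1)" if "k < n" for k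
    using that by (cases n) (auto simp: algebra_simps)
  then show ?thesis
    by (intro separated_by_interlacing) (auto intro!: strict_mono_onI chord_less)
qed

lemma chord_interlacing_odd_even:
  "separated_by (chord (2 * n + 1) ` {1..n}) (chord (2 * n) ` {1..<n})"
proof -
  have "i * (2 * n + 1) < j * (2 * n + 1)" if "i < j" for i j
    using that by (intro mult_strict_right_mono) simp_all
  then show ?thesis
    by (intro separated_by_interlacing) (auto intro!: strict_mono_onI chord_less)
qed

theorem theorem5p2:
  shows "(\<forall>n\<ge>2.
            separated_by {A. 0 < A \<and> p (2*n) A = 0} {A. 0 < A \<and> p (2*n - 1) A = 0} \<and>
            separated_by {A. 0 < A \<and> p (2*n + 1) A = 0} {A. 0 < A \<and> A < 2 \<and> p (2*n) A = 0})
       \<and> (\<forall>n\<ge>1. \<exists>Q P :: real poly.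
            (\<forall>A. poly Q A * (2 - A) = p (2*n) A) \<and>
            (\<forall>A. poly P A = p (2*n - 1) A) \<and>
            even_real_simple_roots Q n \<and> even_real_simple_roots P n)"
proof (intro conjI allI impI)
  fix n :: nat
  assume "2 \<le> n"
  then have "0 < n" by simp
  show "separated_by {A. 0 < A \<and> p (2*n) A = 0} {A. 0 < A \<and> p (2*n - 1) A = 0}"
    unfolding positive_roots_p_even(1)[OF \<open>0 < n\<close>] positive_roots_p_odd[OF \<open>0 < n\<close>]
    by (rule chord_interlacing_even_odd[OF \<open>0 < n\<close>])
  show "separated_by {A. 0 < A \<and> p (2*n + 1) A = 0} {A. 0 < A \<and> A < 2 \<and> p (2*n) A = 0}"
    using chord_interlacing_odd_even[of n] positive_roots_p_odd[of "Suc n"]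
    by (simp add: positive_roots_p_even(2)[OF \<open>0 < n\<close>] atLeastLessThanSuc_atLeastAtMost)
next
  fix n :: nat
  assume "1 \<le> n"
  then have "0 < n" by simp
  show "\<exists>Q P :: real poly.
          (\<forall>A. poly Q A * (2 - A) = p (2*n) A) \<and> (\<forall>A. poly P A = p (2*n - 1) A) \<and>
          even_real_simple_roots Q n \<and> even_real_simple_roots P n"
    by (rule exI[of _ "Q_poly n"], rule exI[of _ "P_poly n"])
      (use p_even_eq[OF \<open>0 < n\<close>] p_odd_eq[OF \<open>0 < n\<close>]
        Q_poly_roots(2)[OF \<open>0 < n\<close>] P_poly_roots(2)[OF \<open>0 < n\<close>] in \<open>simp add: mult.commute\<close>)
qed

end
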